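(* For every graph $G$ and every integer $t\ge 1$, $f^-(t\cdot K_1+G)=f^-(G)$ and $f^+(t\cdot K_1+G)=f^+(G)$, where $t\cdot K_1$ denotes the edgeless graph on $t$ vertices.
   Context: All graphs are finite, simple, undirected and connected (except the edgeless graph $t\cdot K_1$ used in the join). $N[v]=N(v)\cup\{v\}$ is the closed neighbourhood. A chromatic colouring of $G$ is a proper vertex colouring $c:V(G)\to\{c_1,\dots,c_{\chi(G)}\}$. With respect to $c$, a vertex $v$ yields a rainbow neighbourhood if $N[v]$ contains a vertex of each colour $c_1,\dots,c_{\chi(G)}$; $r_\chi(G)$ is the number of such vertices, and $r^-_\chi(G)$, $r^+_\chi(G)$ are its minimum and maximum over all chromatic colourings of $G$. Fading: for a set $F\subseteq V(G)$ (a fade set), the vertices of $F$ receive a transparent colour $c^\circ$ not among $c_1,\dots,c_{\chi(G)}$; after fading, $v$ yields a rainbow neighbourhood iff for every $i$ some vertex of $N[v]\setminus F$ has colour $c_i$. The fading number $f^-(G)$ is the maximum $|F|$ over chromatic colourings $c$ attaining $r_\chi=r^-_\chi(G)$ and fade sets $F$ such that, after fading $F$, the number of vertices yielding rainbow neighbourhoods is still $r^-_\chi(G)$; $f^+(G)$ is defined analogously with $r^+_\chi(G)$. The join $G_1+G_2$ of vertex-disjoint graphs is $G_1\cup G_2$ together with all edges joining a vertex of $G_1$ to a vertex of $G_2$. *)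

theory Defs
  imports Main
begin

record 'a graph =
  verts :: "'a set"
  adj :: "'a \<Rightarrow> 'a \<Rightarrow> bool"

definition simple_graph :: "'a graph \<Rightarrow> bool" where
  "simple_graph G \<longleftrightarrow> finite (verts G)
     \<and> (\<forall>u v. adj G u v \<longrightarrow> u \<in> verts G \<and> v \<in> verts G)
     \<and> (\<forall>u v. adj G u v \<longrightarrow> adj G v u)
     \<and> (\<forall>v. \<not> adj G v v)"

definition connected_graph :: "'a graph \<Rightarrow> bool" where
  "connected_graph G \<longleftrightarrow> verts G \<noteq> {}
     \<and> (\<forall>u\<in>verts G. \<forall>v\<in>verts G. (adj G)\<^sup>*\<^sup>* u v)"

definition edgeless :: "nat \<Rightarrow> nat graph" where
  "edgeless t = \<lparr> verts = {..<t}, adj = (\<lambda>_ _. False) \<rparr>"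

definition join :: "'a graph \<Rightarrow> 'b graph \<Rightarrow> ('a + 'b) graph" where
  "join G1 G2 = \<lparr> verts = Inl ` verts G1 \<union> Inr ` verts G2,
     adj = (\<lambda>x y. case (x, y) of
              (Inl a, Inl b) \<Rightarrow> adj G1 a b
            | (Inr a, Inr b) \<Rightarrow> adj G2 a b
            | (Inl a, Inr b) \<Rightarrow> a \<in> verts G1 \<and> b \<in> verts G2
            | (Inr a, Inl b) \<Rightarrow> a \<in> verts G2 \<and> b \<in> verts G1) \<rparr>"

definition closed_nbhd :: "'a graph \<Rightarrow> 'a \<Rightarrow> 'a set" where
  "closed_nbhd G v = {u \<in> verts G. adj G v u} \<union> {v}"

definition proper_colouring :: "'a graph \<Rightarrow> ('a \<Rightarrow> nat) \<Rightarrow> nat \<Rightarrow> bool" where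
  "proper_colouring G c k \<longleftrightarrow> (\<forall>v\<in>verts G. c v < k)
     \<and> (\<forall>u\<in>verts G. \<forall>v\<in>verts G. adj G u v \<longrightarrow> c u \<noteq> c v)"

definition chromatic_number :: "'a graph \<Rightarrow> nat" where
  "chromatic_number G = (LEAST k. \<exists>c. proper_colouring G c k)"

definition chromatic_colouring :: "'a graph \<Rightarrow> ('a \<Rightarrow> nat) \<Rightarrow> bool" where
  "chromatic_colouring G c \<longleftrightarrow> proper_colouring G c (chromatic_number G)"

definition rainbow_faded :: "'a graph \<Rightarrow> ('a \<Rightarrow> nat) \<Rightarrow> 'a set \<Rightarrow> 'a \<Rightarrow> bool" where
  "rainbow_faded G c F v \<longleftrightarrow>
     (\<forall>i < chromatic_number G. \<exists>u \<in> closed_nbhd G v - F. c u = i)"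

definition r_chi_faded :: "'a graph \<Rightarrow> ('a \<Rightarrow> nat) \<Rightarrow> 'a set \<Rightarrow> nat" where
  "r_chi_faded G c F = card {v \<in> verts G. rainbow_faded G c F v}"

definition r_chi :: "'a graph \<Rightarrow> ('a \<Rightarrow> nat) \<Rightarrow> nat" where
  "r_chi G c = r_chi_faded G c {}"

definition r_chi_minus :: "'a graph \<Rightarrow> nat" where
  "r_chi_minus G = Min {r_chi G c | c. chromatic_colouring G c}"

definition r_chi_plus :: "'a graph \<Rightarrow> nat" where
  "r_chi_plus G = Max {r_chi G c | c. chromatic_colouring G c}"

definition fading_minus :: "'a graph \<Rightarrow> nat" where
  "fading_minus G = Max {card F | c F. chromatic_colouring G c
      \<and> r_chi G c = r_chi_minus G \<and> F \<subseteq> verts G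
      \<and> r_chi_faded G c F = r_chi_minus G}"

definition fading_plus :: "'a graph \<Rightarrow> nat" where
  "fading_plus G = Max {card F | c F. chromatic_colouring G c
      \<and> r_chi G c = r_chi_plus G \<and> F \<subseteq> verts G
      \<and> r_chi_faded G c F = r_chi_plus G}"

end

(*
  Every vertex of t K_1 is adjacent to all of G, so chi(t K_1 + G) = chi(G) + 1, and after a
  permutation of colours a chromatic colouring of the join gives the whole edgeless side the new
  colour and restricts to a chromatic colouring of G; conversely every chromatic colouring of G
  extends in this way. A chromatic colouring always has a rainbow vertex, so G shows every old
  colour: each edgeless vertex is rainbow, and a vertex of G is rainbow in the join iff it is
  rainbow in G. Hence r_chi of the join is t + r_chi of the restriction. Fading an edgeless
  vertex destroys its rainbow neighbourhood, since its colour occurs nowhere else in it, so the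
  fade sets of the join that keep the count are exactly the fade sets of G that keep the count
  of G, and the two fading numbers agree.
*)

theory Submission
  imports Defs "HOL-Combinatorics.Permutations"
begin

lemma rainbow_faded_iff_subset_image:
  "rainbow_faded G c F v \<longleftrightarrow> {..<chromatic_number G} \<subseteq> c ` (closed_nbhd G v - F)"
  unfolding rainbow_faded_def by (auto simp: subset_iff image_iff)

lemma rainbow_faded_antimono:
  "F1 \<subseteq> F2 \<Longrightarrow> rainbow_faded G c F2 v \<Longrightarrow> rainbow_faded G c F1 v"
  unfolding rainbow_faded_def by blast

lemma closed_nbhd_subset: "v \<in> verts G \<Longrightarrow> closed_nbhd G v \<subseteq> verts G"
  by (auto simp: closed_nbhd_def)

lemma self_in_closed_nbhd: "v \<in> closed_nbhd G v"
  by (simp add: closed_nbhd_def)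

lemma chromatic_number_le: "proper_colouring G c k \<Longrightarrow> chromatic_number G \<le> k"
  unfolding chromatic_number_def by (rule Least_le) blast

lemma chromatic_colouring_exists: "proper_colouring G c k \<Longrightarrow> \<exists>c. chromatic_colouring G c"
  unfolding chromatic_colouring_def chromatic_number_def by (rule LeastI_ex) blast

lemma simple_graph_colourable:
  assumes "simple_graph G"
  shows "\<exists>c. chromatic_colouring G c"
proof -
  have "finite (verts G)"
    using assms by (simp add: simple_graph_def)
  then obtain f and n :: nat where f: "f ` verts G = {i. i < n}" "inj_on f (verts G)"
    by (metis finite_imp_inj_to_nat_seg)
  have "proper_colouring G f n"
    unfolding proper_colouring_def
  proof (intro conjI ballI impI)
    fix v assume "v \<in> verts G"
    then show "f v < n" using f(1) by blast
  next
    fix u v assume "u \<in> verts G" "v \<in> verts G" "adj G u v"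
    moreover from this have "u \<noteq> v"
      using assms by (auto simp: simple_graph_def)
    ultimately show "f u \<noteq> f v"
      using f(2) by (meson inj_onD)
  qed
  then show ?thesis
    by (rule chromatic_colouring_exists)
qed

text \<open>If no vertex saw every colour, each vertex of the last colour could be recoloured with a
  colour missing from its closed neighbourhood, saving one colour.\<close>
lemma chromatic_colouring_has_rainbow_vertex:
  assumes simple: "simple_graph G" and nonempty: "verts G \<noteq> {}"
    and chromatic: "chromatic_colouring G c"
  shows "\<exists>v\<in>verts G. rainbow_faded G c {} v"
proof (rule ccontr)
  define k where "k = chromatic_number G"
  have proper: "proper_colouring G c k"
    using chromatic by (simp add: chromatic_colouring_def k_def)
  assume "\<not> ?thesis"
  then have "\<forall>v\<in>verts G. \<not> {..<k} \<subseteq> c ` closed_nbhd G v"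
    unfolding rainbow_faded_iff_subset_image k_def Diff_empty by blast
  then have "\<forall>v\<in>verts G. \<exists>i. i < k \<and> i \<notin> c ` closed_nbhd G v"
    by (simp add: subset_iff)
  then have "\<exists>miss. \<forall>v\<in>verts G. miss v < k \<and> miss v \<notin> c ` closed_nbhd G v"
    by (rule bchoice)
  then obtain miss where miss: "\<forall>v\<in>verts G. miss v < k \<and> miss v \<notin> c ` closed_nbhd G v" ..
  obtain w where "w \<in> verts G"
    using nonempty by blast
  then have "k \<ge> 1"
    using proper by (auto simp: proper_colouring_def)
  define d where "d v = (if c v = k - 1 then miss v else c v)" for v
  have "proper_colouring G d (k - 1)"
    unfolding proper_colouring_def
  proof (intro conjI ballI impI)
    fix v assume "v \<in> verts G"
    moreover have "miss v \<noteq> c v"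
      using miss \<open>v \<in> verts G\<close> self_in_closed_nbhd[of v G] by auto
    ultimately show "d v < k - 1"
      using miss proper by (auto simp: d_def proper_colouring_def)
  next
    fix u v assume uv: "u \<in> verts G" "v \<in> verts G" "adj G u v"
    then have "u \<in> closed_nbhd G v" "v \<in> closed_nbhd G u"
      using simple by (auto simp: closed_nbhd_def simple_graph_def)
    then have "c u \<in> c ` closed_nbhd G v" "c v \<in> c ` closed_nbhd G u"
      by simp_all
    then have "c u \<noteq> miss v" "c v \<noteq> miss u"
      using miss uv(1,2) by auto
    moreover have "c u \<noteq> c v"
      using proper uv by (simp add: proper_colouring_def)
    ultimately show "d u \<noteq> d v"
      by (simp add: d_def)
  qed
  then have "k \<le> k - 1"
    unfolding k_def by (rule chromatic_number_le)
  with \<open>k \<ge> 1\<close> show False by simp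
qed

lemma chromatic_colouring_image:
  assumes "simple_graph G" "verts G \<noteq> {}" "chromatic_colouring G c"
  shows "c ` verts G = {..<chromatic_number G}"
proof
  show "c ` verts G \<subseteq> {..<chromatic_number G}"
    using assms(3) by (auto simp: chromatic_colouring_def proper_colouring_def)
  obtain v where "v \<in> verts G" "rainbow_faded G c {} v"
    using chromatic_colouring_has_rainbow_vertex assms by blast
  then show "{..<chromatic_number G} \<subseteq> c ` verts G"
    using closed_nbhd_subset[of v G] by (auto simp: rainbow_faded_iff_subset_image)
qed

lemma proper_colouring_permute:
  assumes "proper_colouring G c m" "\<pi> permutes {..<m}"
  shows "proper_colouring G (\<pi> \<circ> c) m"
  using assms permutes_in_image[OF assms(2)] permutes_inj[OF assms(2)]
  unfolding proper_colouring_def by (simp add: inj_eq)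

lemma chromatic_colouring_permute:
  "chromatic_colouring G c \<Longrightarrow> \<pi> permutes {..<chromatic_number G}
    \<Longrightarrow> chromatic_colouring G (\<pi> \<circ> c)"
  unfolding chromatic_colouring_def by (rule proper_colouring_permute)

lemma rainbow_faded_permute:
  assumes "\<pi> permutes {..<chromatic_number G}"
  shows "rainbow_faded G (\<pi> \<circ> c) F v \<longleftrightarrow> rainbow_faded G c F v"
proof -
  have "{..<chromatic_number G} \<subseteq> \<pi> ` X \<longleftrightarrow> {..<chromatic_number G} \<subseteq> X" for X
    using inj_image_subset_iff[OF permutes_inj[OF assms]] permutes_image[OF assms] by metis
  then show ?thesis
    unfolding rainbow_faded_iff_subset_image image_comp[symmetric] by simp
qed

lemma r_chi_faded_permute:
  "\<pi> permutes {..<chromatic_number G} \<Longrightarrow> r_chi_faded G (\<pi> \<circ> c) F = r_chi_faded G c F"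
  unfolding r_chi_faded_def by (simp add: rainbow_faded_permute)

lemma r_chi_le_card: "finite (verts G) \<Longrightarrow> r_chi G c \<le> card (verts G)"
  unfolding r_chi_def r_chi_faded_def by (rule card_mono) auto

lemma r_chi_faded_eq_r_chi_iff:
  assumes "finite (verts G)"
  shows "r_chi_faded G c F = r_chi G c
    \<longleftrightarrow> (\<forall>v\<in>verts G. rainbow_faded G c {} v \<longrightarrow> rainbow_faded G c F v)"
proof -
  let ?R = "\<lambda>F. {v \<in> verts G. rainbow_faded G c F v}"
  have sub: "?R F \<subseteq> ?R {}"
    using rainbow_faded_antimono[of "{}" F] by blast
  have "finite (?R {})"
    using assms by simp
  then have "card (?R F) = card (?R {}) \<longleftrightarrow> ?R F = ?R {}"
    using card_subset_eq[OF _ sub] by auto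
  also have "\<dots> \<longleftrightarrow> (\<forall>v\<in>verts G. rainbow_faded G c {} v \<longrightarrow> rainbow_faded G c F v)"
    using sub by blast
  finally show ?thesis
    unfolding r_chi_def r_chi_faded_def .
qed

lemma all_colours_outside_fade_set:
  assumes "simple_graph G" "verts G \<noteq> {}" "chromatic_colouring G c"
    and "r_chi_faded G c F = r_chi G c"
  shows "{..<chromatic_number G} \<subseteq> c ` (verts G - F)"
proof -
  obtain v where v: "v \<in> verts G" "rainbow_faded G c {} v"
    using chromatic_colouring_has_rainbow_vertex[OF assms(1-3)] by blast
  have "finite (verts G)"
    using assms(1) by (simp add: simple_graph_def)
  then have "rainbow_faded G c F v"
    using assms(4) v r_chi_faded_eq_r_chi_iff by blast
  then show ?thesis
    using closed_nbhd_subset[OF v(1)] by (auto simp: rainbow_faded_iff_subset_image)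
qed

lemma Inl_in_Plus_iff [simp]: "Inl a \<in> A <+> B \<longleftrightarrow> a \<in> A"
  by auto

lemma Inr_in_Plus_iff [simp]: "Inr b \<in> A <+> B \<longleftrightarrow> b \<in> B"
  by auto

lemma verts_join_edgeless: "verts (join (edgeless t) G) = {..<t} <+> verts G"
  by (simp add: join_def edgeless_def Plus_def)

lemma adj_join_edgeless [simp]:
  "\<not> adj (join (edgeless t) G) (Inl i) (Inl j)"
  "adj (join (edgeless t) G) (Inr u) (Inr v) \<longleftrightarrow> adj G u v"
  "adj (join (edgeless t) G) (Inl i) (Inr v) \<longleftrightarrow> i < t \<and> v \<in> verts G"
  "adj (join (edgeless t) G) (Inr v) (Inl i) \<longleftrightarrow> v \<in> verts G \<and> i < t"
  by (simp_all add: join_def edgeless_def)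

lemma finite_verts_join_edgeless:
  "finite (verts G) \<Longrightarrow> finite (verts (join (edgeless t) G))"
  by (simp add: verts_join_edgeless)

lemma closed_nbhd_join_edgeless_Inl:
  "i < t \<Longrightarrow> closed_nbhd (join (edgeless t) G) (Inl i) = insert (Inl i) (Inr ` verts G)"
  by (auto simp: closed_nbhd_def verts_join_edgeless)

lemma closed_nbhd_join_edgeless_Inr:
  assumes "simple_graph G" "v \<in> verts G"
  shows "closed_nbhd (join (edgeless t) G) (Inr v) = {..<t} <+> closed_nbhd G v"
  using assms by (auto simp: closed_nbhd_def verts_join_edgeless simple_graph_def)

lemma proper_colouring_join_edgeless_extend:
  "proper_colouring G d k
    \<Longrightarrow> proper_colouring (join (edgeless t) G) (case_sum (\<lambda>_. k) d) (Suc k)"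
  by (auto simp: proper_colouring_def verts_join_edgeless)

lemma proper_colouring_join_edgeless_restrict:
  assumes "proper_colouring (join (edgeless t) G) c (Suc k)" "i < t" "c (Inl i) = k"
  shows "proper_colouring G (c \<circ> Inr) k"
  unfolding proper_colouring_def
proof (intro conjI ballI impI)
  fix v assume "v \<in> verts G"
  then have "c (Inr v) < Suc k" "c (Inr v) \<noteq> c (Inl i)"
    using assms(1,2) unfolding proper_colouring_def verts_join_edgeless by simp_all
  with assms(3) show "(c \<circ> Inr) v < k" by simp
next
  fix u v assume "u \<in> verts G" "v \<in> verts G" "adj G u v"
  then show "(c \<circ> Inr) u \<noteq> (c \<circ> Inr) v"
    using assms(1) unfolding proper_colouring_def verts_join_edgeless by simp
qed

lemma chromatic_number_join_edgeless:
  assumes "simple_graph G" "1 \<le> t"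
  shows "chromatic_number (join (edgeless t) G) = Suc (chromatic_number G)"
proof (rule antisym)
  obtain d where "proper_colouring G d (chromatic_number G)"
    using simple_graph_colourable[OF assms(1)] by (auto simp: chromatic_colouring_def)
  then have extended: "proper_colouring (join (edgeless t) G)
      (case_sum (\<lambda>_. chromatic_number G) d) (Suc (chromatic_number G))"
    by (rule proper_colouring_join_edgeless_extend)
  then show "chromatic_number (join (edgeless t) G) \<le> Suc (chromatic_number G)"
    by (rule chromatic_number_le)
  obtain c where c: "proper_colouring (join (edgeless t) G) c (chromatic_number (join (edgeless t) G))"
    using chromatic_colouring_exists[OF extended] by (auto simp: chromatic_colouring_def)
  have "Inl 0 \<in> verts (join (edgeless t) G)"
    using assms(2) by (simp add: verts_join_edgeless)
  then have "c (Inl 0) < chromatic_number (join (edgeless t) G)"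
    using c by (simp add: proper_colouring_def)
  then obtain m where m: "chromatic_number (join (edgeless t) G) = Suc m" "c (Inl 0) \<le> m"
    by (cases "chromatic_number (join (edgeless t) G)") auto
  let ?\<pi> = "Transposition.transpose (c (Inl 0)) m"
  have "?\<pi> permutes {..<Suc m}"
    using m(2) by (simp add: permutes_swap_id)
  then have "proper_colouring (join (edgeless t) G) (?\<pi> \<circ> c) (Suc m)"
    using c m(1) by (simp add: proper_colouring_permute)
  then have "proper_colouring G (?\<pi> \<circ> c \<circ> Inr) m"
    by (rule proper_colouring_join_edgeless_restrict[where i = 0]) (use assms(2) in simp_all)
  then show "Suc (chromatic_number G) \<le> chromatic_number (join (edgeless t) G)"
    using m(1) chromatic_number_le by (metis Suc_le_mono)
qed

text \<open>The normalisation of the colour of \<open>Inl 0\<close> loses no generality, by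
  \<open>join_edgeless_colouring_normalise\<close>.\<close>
locale join_edgeless_colouring =
  fixes G :: "'a graph" and t :: nat and c :: "nat + 'a \<Rightarrow> nat"
  assumes simple: "simple_graph G" and nonempty: "verts G \<noteq> {}" and t_pos: "1 \<le> t"
    and chromatic: "chromatic_colouring (join (edgeless t) G) c"
    and colour_Inl_0: "c (Inl 0) = chromatic_number G"
begin

abbreviation J :: "(nat + 'a) graph" where "J \<equiv> join (edgeless t) G"

lemma chromatic_number_J: "chromatic_number J = Suc (chromatic_number G)"
  by (rule chromatic_number_join_edgeless[OF simple t_pos])

lemma proper: "proper_colouring J c (Suc (chromatic_number G))"
  using chromatic by (simp add: chromatic_colouring_def chromatic_number_J)

lemma restriction_chromatic: "chromatic_colouring G (c \<circ> Inr)"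
  unfolding chromatic_colouring_def
  by (rule proper_colouring_join_edgeless_restrict[OF proper, where i = 0])
    (use t_pos colour_Inl_0 in simp_all)

lemma restriction_image: "(c \<circ> Inr) ` verts G = {..<chromatic_number G}"
  by (rule chromatic_colouring_image[OF simple nonempty restriction_chromatic])

lemma colour_Inl:
  assumes "i < t"
  shows "c (Inl i) = chromatic_number G"
proof -
  have "c (Inl i) < Suc (chromatic_number G)"
    using proper assms by (simp add: proper_colouring_def verts_join_edgeless)
  moreover have "c (Inl i) \<notin> (c \<circ> Inr) ` verts G"
    using proper assms by (auto simp: proper_colouring_def verts_join_edgeless)
  ultimately show ?thesis
    unfolding restriction_image by simp
qed

lemma image_colour_Inl: "(c \<circ> Inl) ` {..<t} = {chromatic_number G}"
proof -
  have "(c \<circ> Inl) ` {..<t} = (\<lambda>_. chromatic_number G) ` {..<t}"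
    using colour_Inl by (intro image_cong) simp_all
  also have "\<dots> = {chromatic_number G}"
    by (rule image_constant[of 0]) (use t_pos in simp)
  finally show ?thesis .
qed

lemma rainbow_faded_Inr:
  assumes "v \<in> verts G"
  shows "rainbow_faded J c (Inr ` F) (Inr v) \<longleftrightarrow> rainbow_faded G (c \<circ> Inr) F v"
proof -
  have nbhd: "closed_nbhd J (Inr v) - Inr ` F = Inl ` {..<t} \<union> Inr ` (closed_nbhd G v - F)"
    unfolding closed_nbhd_join_edgeless_Inr[OF simple assms] Plus_def by blast
  have "c ` (closed_nbhd J (Inr v) - Inr ` F)
      = insert (chromatic_number G) ((c \<circ> Inr) ` (closed_nbhd G v - F))"
    unfolding nbhd image_Un image_comp image_colour_Inl by simp
  then show ?thesis
    by (simp add: rainbow_faded_iff_subset_image chromatic_number_J lessThan_Suc subset_insert)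
qed

lemma rainbow_faded_Inl:
  assumes "i < t"
  shows "rainbow_faded J c (Inr ` F) (Inl i)
    \<longleftrightarrow> {..<chromatic_number G} \<subseteq> (c \<circ> Inr) ` (verts G - F)"
proof -
  have "closed_nbhd J (Inl i) - Inr ` F = insert (Inl i) (Inr ` (verts G - F))"
    unfolding closed_nbhd_join_edgeless_Inl[OF assms] by blast
  then have "c ` (closed_nbhd J (Inl i) - Inr ` F)
      = insert (chromatic_number G) ((c \<circ> Inr) ` (verts G - F))"
    using colour_Inl[OF assms] by (simp add: image_comp)
  then show ?thesis
    by (simp add: rainbow_faded_iff_subset_image chromatic_number_J lessThan_Suc subset_insert)
qed

lemma not_rainbow_faded_Inl:
  assumes "i < t" "Inl i \<in> F'"
  shows "\<not> rainbow_faded J c F' (Inl i)"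
proof -
  have "c ` (closed_nbhd J (Inl i) - F') \<subseteq> (c \<circ> Inr) ` verts G"
    using assms unfolding closed_nbhd_join_edgeless_Inl[OF assms(1)] by auto
  then have "chromatic_number G \<notin> c ` (closed_nbhd J (Inl i) - F')"
    unfolding restriction_image by auto
  moreover have "chromatic_number G \<in> {..<chromatic_number J}"
    by (simp add: chromatic_number_J)
  ultimately show ?thesis
    unfolding rainbow_faded_iff_subset_image by blast
qed

lemma rainbow_vertices_join:
  assumes "{..<chromatic_number G} \<subseteq> (c \<circ> Inr) ` (verts G - F)"
  shows "{x \<in> verts J. rainbow_faded J c (Inr ` F) x}
    = {..<t} <+> {v \<in> verts G. rainbow_faded G (c \<circ> Inr) F v}"
proof (rule set_eqI)
  fix x
  show "x \<in> {x \<in> verts J. rainbow_faded J c (Inr ` F) x}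
    \<longleftrightarrow> x \<in> {..<t} <+> {v \<in> verts G. rainbow_faded G (c \<circ> Inr) F v}"
    using assms rainbow_faded_Inl rainbow_faded_Inr
    by (cases x) (auto simp: verts_join_edgeless)
qed

lemma r_chi_faded_join:
  assumes "{..<chromatic_number G} \<subseteq> (c \<circ> Inr) ` (verts G - F)"
  shows "r_chi_faded J c (Inr ` F) = t + r_chi_faded G (c \<circ> Inr) F"
  using simple unfolding r_chi_faded_def rainbow_vertices_join[OF assms]
  by (simp add: card_Plus simple_graph_def)

lemma r_chi_join: "r_chi J c = t + r_chi G (c \<circ> Inr)"
  using r_chi_faded_join[of "{}"] restriction_image by (simp add: r_chi_def)

lemma preserving_fade_set_join:
  assumes "F' \<subseteq> verts J" "r_chi_faded J c F' = r_chi J c"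
  shows "\<exists>F \<subseteq> verts G. F' = Inr ` F \<and> r_chi_faded G (c \<circ> Inr) F = r_chi G (c \<circ> Inr)"
proof -
  have "finite (verts J)"
    using simple by (simp add: simple_graph_def finite_verts_join_edgeless)
  then have keep: "\<forall>x\<in>verts J. rainbow_faded J c {} x \<longrightarrow> rainbow_faded J c F' x"
    using assms(2) r_chi_faded_eq_r_chi_iff by blast
  have rainbow_Inl: "rainbow_faded J c F' (Inl i)" if "i < t" for i
    using keep rainbow_faded_Inl[OF that, of "{}"] restriction_image that
    by (simp add: verts_join_edgeless)
  define F where "F = Inr -` F'"
  have F': "F' = Inr ` F"
  proof (intro set_eqI iffI)
    fix x assume x: "x \<in> F'"
    show "x \<in> Inr ` F"
    proof (cases x)
      case (Inl i)
      then have "i < t"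
        using x assms(1) by (auto simp: verts_join_edgeless)
      then show ?thesis
        using rainbow_Inl not_rainbow_faded_Inl x Inl by blast
    next
      case (Inr v)
      then show ?thesis
        using x by (simp add: F_def)
    qed
  qed (auto simp: F_def)
  have "F \<subseteq> verts G"
    using assms(1) by (auto simp: F_def verts_join_edgeless)
  moreover have "rainbow_faded J c (Inr ` F) (Inl 0)"
    using rainbow_Inl[of 0] t_pos F' by simp
  then have "{..<chromatic_number G} \<subseteq> (c \<circ> Inr) ` (verts G - F)"
    using rainbow_faded_Inl[of 0 F] t_pos by simp
  then have "r_chi_faded G (c \<circ> Inr) F = r_chi G (c \<circ> Inr)"
    using r_chi_faded_join r_chi_join assms(2) F' by simp
  ultimately show ?thesis
    using F' by blast
qed

end

lemma join_edgeless_colouring_extend: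
  assumes "simple_graph G" "verts G \<noteq> {}" "1 \<le> t" "chromatic_colouring G d"
  shows "join_edgeless_colouring G t (case_sum (\<lambda>_. chromatic_number G) d)"
  using assms proper_colouring_join_edgeless_extend chromatic_number_join_edgeless[OF assms(1,3)]
  by unfold_locales (simp_all add: chromatic_colouring_def)

lemma join_edgeless_colouring_normalise:
  assumes "simple_graph G" "verts G \<noteq> {}" "1 \<le> t"
    and chromatic: "chromatic_colouring (join (edgeless t) G) c"
  obtains c' where "join_edgeless_colouring G t c'"
    and "\<And>F. r_chi_faded (join (edgeless t) G) c' F = r_chi_faded (join (edgeless t) G) c F"
proof -
  let ?\<pi> = "Transposition.transpose (c (Inl 0)) (chromatic_number G)"
  have \<chi>: "chromatic_number (join (edgeless t) G) = Suc (chromatic_number G)"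
    using chromatic_number_join_edgeless assms(1,3) .
  have "Inl 0 \<in> verts (join (edgeless t) G)"
    using assms(3) by (simp add: verts_join_edgeless)
  then have "c (Inl 0) < Suc (chromatic_number G)"
    using chromatic \<chi> by (simp add: chromatic_colouring_def proper_colouring_def)
  then have \<pi>: "?\<pi> permutes {..<chromatic_number (join (edgeless t) G)}"
    unfolding \<chi> by (simp add: permutes_swap_id)
  have "join_edgeless_colouring G t (?\<pi> \<circ> c)"
    using assms chromatic_colouring_permute[OF chromatic \<pi>] by unfold_locales simp_all
  with r_chi_faded_permute[OF \<pi>] show ?thesis
    using that by blast
qed

lemma r_chi_values_join_edgeless:
  assumes "simple_graph G" "verts G \<noteq> {}" "1 \<le> t"
  shows "{r_chi (join (edgeless t) G) c |c. chromatic_colouring (join (edgeless t) G) c}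
    = (+) t ` {r_chi G d |d. chromatic_colouring G d}"
proof (intro equalityI subsetI)
  fix n assume "n \<in> {r_chi (join (edgeless t) G) c |c. chromatic_colouring (join (edgeless t) G) c}"
  then obtain c where c: "chromatic_colouring (join (edgeless t) G) c" "n = r_chi (join (edgeless t) G) c"
    by blast
  obtain c' where c': "join_edgeless_colouring G t c'"
    and same: "\<And>F. r_chi_faded (join (edgeless t) G) c' F = r_chi_faded (join (edgeless t) G) c F"
    using join_edgeless_colouring_normalise[OF assms c(1)] by blast
  have "n = t + r_chi G (c' \<circ> Inr)"
    using c(2) same[of "{}"] join_edgeless_colouring.r_chi_join[OF c'] by (simp add: r_chi_def)
  then show "n \<in> (+) t ` {r_chi G d |d. chromatic_colouring G d}"
    using join_edgeless_colouring.restriction_chromatic[OF c'] by blast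
next
  fix n assume "n \<in> (+) t ` {r_chi G d |d. chromatic_colouring G d}"
  then obtain d where d: "chromatic_colouring G d" "n = t + r_chi G d"
    by blast
  let ?c = "case_sum (\<lambda>_. chromatic_number G) d"
  interpret join_edgeless_colouring G t ?c
    using join_edgeless_colouring_extend[OF assms d(1)] .
  have "n = r_chi (join (edgeless t) G) ?c"
    using d(2) r_chi_join by (simp add: case_sum_o_inj)
  then show "n \<in> {r_chi (join (edgeless t) G) c |c. chromatic_colouring (join (edgeless t) G) c}"
    using chromatic by blast
qed

lemma finite_r_chi_values:
  "simple_graph G \<Longrightarrow> finite {r_chi G c |c. chromatic_colouring G c}"
  by (rule finite_subset[of _ "{..card (verts G)}"]) (auto simp: simple_graph_def r_chi_le_card)

lemma r_chi_minus_join_edgeless: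
  assumes "simple_graph G" "verts G \<noteq> {}" "1 \<le> t"
  shows "r_chi_minus (join (edgeless t) G) = t + r_chi_minus G"
  unfolding r_chi_minus_def r_chi_values_join_edgeless[OF assms]
  by (rule mono_Min_commute[symmetric])
    (simp_all add: mono_def finite_r_chi_values simple_graph_colourable assms(1))

lemma r_chi_plus_join_edgeless:
  assumes "simple_graph G" "verts G \<noteq> {}" "1 \<le> t"
  shows "r_chi_plus (join (edgeless t) G) = t + r_chi_plus G"
  unfolding r_chi_plus_def r_chi_values_join_edgeless[OF assms]
  by (rule mono_Max_commute[symmetric])
    (simp_all add: mono_def finite_r_chi_values simple_graph_colourable assms(1))

definition fading_sizes :: "'a graph \<Rightarrow> nat \<Rightarrow> nat set" where
  "fading_sizes G m = {card F |c F. chromatic_colouring G c \<and> r_chi G c = m \<and> F \<subseteq> verts G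
      \<and> r_chi_faded G c F = m}"

lemma fading_minus_eq_Max: "fading_minus G = Max (fading_sizes G (r_chi_minus G))"
  by (simp add: fading_minus_def fading_sizes_def)

lemma fading_plus_eq_Max: "fading_plus G = Max (fading_sizes G (r_chi_plus G))"
  by (simp add: fading_plus_def fading_sizes_def)

lemma fading_sizes_join_edgeless_subset:
  assumes "simple_graph G" "verts G \<noteq> {}" "1 \<le> t"
  shows "fading_sizes (join (edgeless t) G) (t + m) \<subseteq> fading_sizes G m"
proof
  fix n assume "n \<in> fading_sizes (join (edgeless t) G) (t + m)"
  then obtain c F' where c: "chromatic_colouring (join (edgeless t) G) c"
    "r_chi (join (edgeless t) G) c = t + m" "F' \<subseteq> verts (join (edgeless t) G)"
    "r_chi_faded (join (edgeless t) G) c F' = t + m" "n = card F'"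
    unfolding fading_sizes_def by blast
  obtain c' where c': "join_edgeless_colouring G t c'"
    and same: "\<And>F. r_chi_faded (join (edgeless t) G) c' F = r_chi_faded (join (edgeless t) G) c F"
    using join_edgeless_colouring_normalise[OF assms c(1)] by blast
  have r: "r_chi (join (edgeless t) G) c' = t + m" "r_chi_faded (join (edgeless t) G) c' F' = t + m"
    using c(2,4) same by (simp_all add: r_chi_def)
  then obtain F where F: "F \<subseteq> verts G" "F' = Inr ` F"
    "r_chi_faded G (c' \<circ> Inr) F = r_chi G (c' \<circ> Inr)"
    using join_edgeless_colouring.preserving_fade_set_join[OF c' c(3)] by auto
  have "r_chi G (c' \<circ> Inr) = m"
    using r(1) join_edgeless_colouring.r_chi_join[OF c'] by simp
  moreover have "n = card F"
    using c(5) F(2) by (simp add: card_image)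
  ultimately show "n \<in> fading_sizes G m"
    unfolding fading_sizes_def using join_edgeless_colouring.restriction_chromatic[OF c'] F(1,3) by auto
qed

lemma fading_sizes_subset_join_edgeless:
  assumes "simple_graph G" "verts G \<noteq> {}" "1 \<le> t"
  shows "fading_sizes G m \<subseteq> fading_sizes (join (edgeless t) G) (t + m)"
proof
  fix n assume "n \<in> fading_sizes G m"
  then obtain d F where d: "chromatic_colouring G d" "r_chi G d = m" "F \<subseteq> verts G"
    "r_chi_faded G d F = m" "n = card F"
    unfolding fading_sizes_def by blast
  let ?c = "case_sum (\<lambda>_. chromatic_number G) d"
  interpret join_edgeless_colouring G t ?c
    using join_edgeless_colouring_extend[OF assms d(1)] .
  have "{..<chromatic_number G} \<subseteq> (?c \<circ> Inr) ` (verts G - F)"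
    using all_colours_outside_fade_set[OF assms(1,2) d(1)] d(2,4) by (simp add: case_sum_o_inj)
  then have "r_chi_faded (join (edgeless t) G) ?c (Inr ` F) = t + m"
    using r_chi_faded_join d(4) by (simp add: case_sum_o_inj)
  moreover have "r_chi (join (edgeless t) G) ?c = t + m"
    using r_chi_join d(2) by (simp add: case_sum_o_inj)
  moreover have "Inr ` F \<subseteq> verts (join (edgeless t) G)" "n = card (Inr ` F)"
    using d(3,5) by (auto simp: verts_join_edgeless card_image)
  ultimately show "n \<in> fading_sizes (join (edgeless t) G) (t + m)"
    unfolding fading_sizes_def using chromatic by blast
qed

lemma fading_sizes_join_edgeless:
  assumes "simple_graph G" "verts G \<noteq> {}" "1 \<le> t"
  shows "fading_sizes (join (edgeless t) G) (t + m) = fading_sizes G m"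
  using fading_sizes_join_edgeless_subset[OF assms] fading_sizes_subset_join_edgeless[OF assms]
  by (rule equalityI)

theorem mainTheorem9:
  fixes G :: "'a graph" and t :: nat
  assumes "simple_graph G" and "connected_graph G" and "t \<ge> 1"
  shows "fading_minus (join (edgeless t) G) = fading_minus G
       \<and> fading_plus (join (edgeless t) G) = fading_plus G"
proof -
  have "verts G \<noteq> {}"
    using assms(2) by (simp add: connected_graph_def)
  note join_facts = r_chi_minus_join_edgeless r_chi_plus_join_edgeless fading_sizes_join_edgeless
  show ?thesis
    unfolding fading_minus_eq_Max fading_plus_eq_Max
    using join_facts[OF assms(1) \<open>verts G \<noteq> {}\<close> assms(3)] by simp
qed

end
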